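(* Let $\mathcal F$ be a proper filter on $\omega$ and consider the game $\mathfrak G(\mathrm{Fr},\omega,\mathcal F^+)$. Then (1) player I has a winning strategy if and only if $\mathcal F$ is not a weak Q-filter; (2) player II has a winning strategy if and only if $\mathcal F$ is $\omega$-diagonalizable.
   Context: A filter on $\omega$ is a family $\mathcal F\subseteq\mathcal P(\omega)$ closed under finite intersections and supersets and containing all cofinite sets; it is proper if all its members are infinite. $\mathcal F^+=\{X\subseteq\omega:\omega\setminus X\notin\mathcal F\}$. $\mathrm{Fr}$ is the family of cofinite subsets of $\omega$. $X\subseteq^*Y$ means $X\setminus Y$ is finite. Game $\mathfrak G(\mathcal X,\omega,\mathcal Z)$ (for $\mathcal X,\mathcal Z\subseteq\mathcal P(\omega)$): at each stage $k\in\omega$, player I chooses $X_k\in\mathcal X$ and player II responds with $n_k\in X_k$; II wins the play if $\{n_k:k\in\omega\}\in\mathcal Z$, otherwise I wins. $\mathcal F$ is a weak Q-filter if for every partition of $\omega$ into finite sets $\langle s_k:k\in\omega\rangle$ there is $X\in\mathcal F^+$ with $|X\cap s_k|\le1$ for all $k$. $\mathcal F$ is $\omega$-diagonalizable if there are infinite sets $X_n\subseteq\omega$ ($n\in\omega$) such that for every $Y\in\mathcal F$ there is $n$ with $X_n\subseteq^*Y$. *)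

theory Defs
  imports Main
begin

definition Fr :: "nat set set" where
  "Fr = {X. finite (- X)}"

definition is_filter :: "nat set set \<Rightarrow> bool" where
  "is_filter F \<longleftrightarrow>
     (\<forall>X\<in>F. \<forall>Y\<in>F. X \<inter> Y \<in> F) \<and>
     (\<forall>X Y. X \<in> F \<and> X \<subseteq> Y \<longrightarrow> Y \<in> F) \<and>
     Fr \<subseteq> F"

definition proper_filter :: "nat set set \<Rightarrow> bool" where
  "proper_filter F \<longleftrightarrow> is_filter F \<and> (\<forall>X\<in>F. infinite X)"

definition positive_sets :: "nat set set \<Rightarrow> nat set set" where
  "positive_sets F = {X. - X \<notin> F}"

text \<open>Game G(Xs, omega, Z): at stage k player I plays X_k in Xs, player II answers n_k in X_k;
  II wins iff {n_k | k} is in Z.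
  A strategy for I maps the finite sequence of II's previous moves to I's next move.
  A strategy for II maps the nonempty finite sequence of I's moves so far to II's answer.\<close>

definition I_strategy :: "nat set set \<Rightarrow> (nat list \<Rightarrow> nat set) \<Rightarrow> bool" where
  "I_strategy XX \<sigma> \<longleftrightarrow> (\<forall>s. \<sigma> s \<in> XX)"

definition I_winning :: "nat set set \<Rightarrow> nat set set \<Rightarrow> (nat list \<Rightarrow> nat set) \<Rightarrow> bool" where
  "I_winning XX Z \<sigma> \<longleftrightarrow> I_strategy XX \<sigma> \<and>
     (\<forall>n :: nat \<Rightarrow> nat. (\<forall>k. n k \<in> \<sigma> (map n [0..<k])) \<longrightarrow> range n \<notin> Z)"

definition II_strategy :: "nat set set \<Rightarrow> (nat set list \<Rightarrow> nat) \<Rightarrow> bool" where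
  "II_strategy XX \<tau> \<longleftrightarrow> (\<forall>xs. xs \<noteq> [] \<and> set xs \<subseteq> XX \<longrightarrow> \<tau> xs \<in> last xs)"

definition II_winning :: "nat set set \<Rightarrow> nat set set \<Rightarrow> (nat set list \<Rightarrow> nat) \<Rightarrow> bool" where
  "II_winning XX Z \<tau> \<longleftrightarrow> II_strategy XX \<tau> \<and>
     (\<forall>X :: nat \<Rightarrow> nat set. (\<forall>k. X k \<in> XX) \<longrightarrow>
        range (\<lambda>k. \<tau> (map X [0..<Suc k])) \<in> Z)"

definition I_has_winning_strategy :: "nat set set \<Rightarrow> nat set set \<Rightarrow> bool" where
  "I_has_winning_strategy XX Z \<longleftrightarrow> (\<exists>\<sigma>. I_winning XX Z \<sigma>)"

definition II_has_winning_strategy :: "nat set set \<Rightarrow> nat set set \<Rightarrow> bool" where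
  "II_has_winning_strategy XX Z \<longleftrightarrow> (\<exists>\<tau>. II_winning XX Z \<tau>)"

definition finite_partition :: "(nat \<Rightarrow> nat set) \<Rightarrow> bool" where
  "finite_partition s \<longleftrightarrow> (\<forall>k. finite (s k) \<and> s k \<noteq> {}) \<and>
     (\<forall>k l. k \<noteq> l \<longrightarrow> s k \<inter> s l = {}) \<and> (\<Union>k. s k) = UNIV"

definition weak_Q_filter :: "nat set set \<Rightarrow> bool" where
  "weak_Q_filter F \<longleftrightarrow> (\<forall>s. finite_partition s \<longrightarrow>
     (\<exists>X\<in>positive_sets F. \<forall>k. card (X \<inter> s k) \<le> 1))"

definition omega_diagonalizable :: "nat set set \<Rightarrow> bool" where
  "omega_diagonalizable F \<longleftrightarrow> (\<exists>X :: nat \<Rightarrow> nat set. (\<forall>n. infinite (X n)) \<and>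
     (\<forall>Y\<in>F. \<exists>n. finite (X n - Y)))"

end

theory Submission
  imports Defs "HOL-Library.Infinite_Set" "HOL-Library.Nat_Bijection" "HOL-Library.Countable"
begin

(*
  (1) If a partition into finite blocks witnesses that F is not a weak Q-filter, player I wins
  by forbidding every block that the play has already visited. Conversely, since I plays
  cofinite sets, a strategy of I admits thresholds m 0 < m 1 < ... such that every position
  whose entries and length are below m K is answered by a set containing all x >= m (K+1).
  A positive set meeting each interval [m k, m (k+1)) at most once can be thinned, according
  to the parity of the interval index, to a positive set whose points are separated by whole
  intervals; its increasing enumeration is a play against the strategy that II wins.

  (2) Given a diagonalizing family D, player II answers at stage prod_encode (n, i) with a
  point of D n above i; the answers meet every D n infinitely often and hence form a positive
  set. Conversely, for a winning strategy of II and a finite sequence t, collect II's answers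
  after I has played the final segments given by t followed by an arbitrary one. These
  countably many sets are infinite, and every Y in F contains one of them, since otherwise
  I could choose its moves so that all of II's answers lie outside Y.
*)

lemma filter_mono: "is_filter F \<Longrightarrow> X \<in> F \<Longrightarrow> X \<subseteq> Y \<Longrightarrow> Y \<in> F"
  by (auto simp: is_filter_def)

lemma filter_Int: "is_filter F \<Longrightarrow> X \<in> F \<Longrightarrow> Y \<in> F \<Longrightarrow> X \<inter> Y \<in> F"
  by (auto simp: is_filter_def)

lemma cofinite_in_filter: "is_filter F \<Longrightarrow> finite (- X) \<Longrightarrow> X \<in> F"
  by (auto simp: is_filter_def Fr_def)

lemma positive_sets_infinite: "is_filter F \<Longrightarrow> X \<in> positive_sets F \<Longrightarrow> infinite X"
  using cofinite_in_filter[of F "- X"] by (auto simp: positive_sets_def)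

lemma positive_sets_Un:
  assumes "is_filter F" "X \<union> Y \<in> positive_sets F"
  shows "X \<in> positive_sets F \<or> Y \<in> positive_sets F"
  using assms filter_Int[of F "- X" "- Y"] by (auto simp: positive_sets_def)

lemma positive_sets_Diff_finite:
  assumes F: "is_filter F" and X: "X \<in> positive_sets F" and "finite A"
  shows "X - A \<in> positive_sets F"
proof -
  have "X \<inter> A \<notin> positive_sets F"
    using positive_sets_infinite[OF F] \<open>finite A\<close> by blast
  moreover have "X = (X - A) \<union> (X \<inter> A)" by blast
  ultimately show ?thesis using positive_sets_Un[OF F] X by metis
qed

definition part_index :: "(nat \<Rightarrow> nat set) \<Rightarrow> nat \<Rightarrow> nat" where
  "part_index s x = (THE k. x \<in> s k)"

lemma part_index_eq:
  assumes "finite_partition s" "x \<in> s k"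
  shows "part_index s x = k"
  unfolding part_index_def
proof (rule the_equality)
  show "\<And>l. x \<in> s l \<Longrightarrow> l = k"
    using assms by (auto simp: finite_partition_def)
qed (fact assms(2))

lemma in_part_index:
  assumes "finite_partition s" shows "x \<in> s (part_index s x)"
proof -
  obtain k where "x \<in> s k" using assms unfolding finite_partition_def by blast
  then show ?thesis using part_index_eq[OF assms] by simp
qed

lemma not_weak_Q_filter_imp_I_has_winning_strategy:
  assumes "\<not> weak_Q_filter F"
  shows "I_has_winning_strategy Fr (positive_sets F)"
proof -
  obtain s where s: "finite_partition s"
    and meets_twice: "\<And>X. X \<in> positive_sets F \<Longrightarrow> \<exists>k. \<not> card (X \<inter> s k) \<le> 1"
    using assms unfolding weak_Q_filter_def by blast
  define \<sigma> where "\<sigma> l = - (\<Union>x\<in>set l. s (part_index s x))" for l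
  have "\<sigma> l \<in> Fr" for l
    using s by (auto simp: \<sigma>_def Fr_def finite_partition_def)
  moreover have "range n \<notin> positive_sets F" if play: "\<forall>k. n k \<in> \<sigma> (map n [0..<k])" for n
  proof
    have later: "n j \<notin> s k" if "i < j" "n i \<in> s k" for i j k
    proof -
      have "n i \<in> set (map n [0..<j])" using \<open>i < j\<close> by simp
      then have "n j \<notin> s (part_index s (n i))" using play by (auto simp: \<sigma>_def)
      then show ?thesis using part_index_eq[OF s \<open>n i \<in> s k\<close>] by simp
    qed
    have "card (range n \<inter> s k) \<le> 1" for k
    proof -
      have "n i = n j" if "n i \<in> s k" "n j \<in> s k" for i j
        using later that by (metis linorder_neq_iff)
      moreover have "finite (range n \<inter> s k)" using s by (simp add: finite_partition_def)
      ultimately show ?thesis by (auto simp: card_le_Suc0_iff_eq)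
    qed
    moreover assume "range n \<in> positive_sets F"
    ultimately show False using meets_twice by blast
  qed
  ultimately show ?thesis
    by (auto simp: I_has_winning_strategy_def I_winning_def I_strategy_def)
qed

definition interval_partition :: "(nat \<Rightarrow> nat) \<Rightarrow> nat \<Rightarrow> nat set" where
  "interval_partition m k = {m k..<m (Suc k)}"

lemma finite_partition_interval_partition:
  assumes m: "strict_mono m" "m 0 = 0"
  shows "finite_partition (interval_partition m)"
  unfolding finite_partition_def
proof (intro conjI allI impI)
  fix k
  show "finite (interval_partition m k)" "interval_partition m k \<noteq> {}"
    using m by (auto simp: interval_partition_def strict_mono_def)
next
  have disjoint: "interval_partition m k \<inter> interval_partition m l = {}" if "k < l" for k l
  proof -
    have "m (Suc k) \<le> m l" using that strict_mono_less_eq[OF m(1)] by simp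
    then show ?thesis by (auto simp: interval_partition_def)
  qed
  fix k l :: nat assume "k \<noteq> l"
  then show "interval_partition m k \<inter> interval_partition m l = {}"
    using disjoint[of k l] disjoint[of l k] by (auto simp: linorder_neq_iff)
next
  show "(\<Union>k. interval_partition m k) = UNIV"
  proof (intro equalityI subsetI UNIV_I)
    fix x
    let ?K = "{k. m k \<le> x}"
    have "?K \<subseteq> {..x}"
      using strict_mono_imp_increasing[OF m(1)] order_trans by blast
    then have fin: "finite ?K" by (rule finite_subset) simp
    moreover have "0 \<in> ?K" using m(2) by simp
    ultimately have "m (Max ?K) \<le> x" using Max_in[OF fin] by auto
    moreover have "Suc (Max ?K) \<notin> ?K" using Max_ge[OF fin] Suc_n_not_le_n by blast
    ultimately show "x \<in> (\<Union>k. interval_partition m k)"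
      by (auto simp: interval_partition_def)
  qed
qed

lemma part_index_interval_partition_mono:
  assumes m: "strict_mono m" "m 0 = 0" and "x \<le> y"
  shows "part_index (interval_partition m) x \<le> part_index (interval_partition m) y"
proof (rule ccontr)
  let ?ix = "part_index (interval_partition m)"
  assume "\<not> ?ix x \<le> ?ix y"
  then have "m (Suc (?ix y)) \<le> m (?ix x)" using strict_mono_less_eq[OF m(1)] by simp
  moreover have "m (?ix x) \<le> x" "y < m (Suc (?ix y))"
    using in_part_index[OF finite_partition_interval_partition[OF m]]
    by (auto simp: interval_partition_def)
  ultimately show False using \<open>x \<le> y\<close> by linarith
qed

definition interval_separated :: "(nat \<Rightarrow> nat) \<Rightarrow> nat set \<Rightarrow> bool" where
  "interval_separated m Y \<longleftrightarrow> (\<forall>y\<in>Y. \<forall>z\<in>Y. y < z \<longrightarrow> (\<exists>K. y < m K \<and> m (Suc K) \<le> z))"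

lemma weak_Q_filter_interval_separated:
  assumes F: "is_filter F" "weak_Q_filter F" and m: "strict_mono m" "m 0 = 0"
  shows "\<exists>Y\<in>positive_sets F. interval_separated m Y"
proof -
  let ?s = "interval_partition m"
  define ix where "ix = part_index ?s"
  have s: "finite_partition ?s" using finite_partition_interval_partition[OF m] .
  then obtain X where X: "X \<in> positive_sets F" and once: "\<And>k. card (X \<inter> ?s k) \<le> 1"
    using F(2) unfolding weak_Q_filter_def by blast
  have ix_inj: "x = y" if "x \<in> X" "y \<in> X" "ix x = ix y" for x y
  proof -
    have "x \<in> X \<inter> ?s (ix x)" "y \<in> X \<inter> ?s (ix x)"
      using that in_part_index[OF s, of x] in_part_index[OF s, of y] by (auto simp: ix_def)
    moreover have "finite (X \<inter> ?s (ix x))" by (simp add: interval_partition_def)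
    ultimately show ?thesis using once[of "ix x"] by (auto simp: card_le_Suc0_iff_eq)
  qed
  define Y where "Y b = {x\<in>X. even (ix x) = b}" for b
  have "X = Y True \<union> Y False" by (auto simp: Y_def)
  then have "Y True \<in> positive_sets F \<or> Y False \<in> positive_sets F"
    using positive_sets_Un[OF F(1)] X by simp
  then obtain b where Yb: "Y b \<in> positive_sets F" by blast
  have "interval_separated m (Y b)"
    unfolding interval_separated_def
  proof (intro ballI impI)
    fix y z assume yz: "y \<in> Y b" "z \<in> Y b" "y < z"
    have "y \<in> X" "z \<in> X" using yz by (simp_all add: Y_def)
    have "ix y \<le> ix z"
      using part_index_interval_partition_mono[OF m, of y z] yz(3) by (simp add: ix_def)
    moreover have "ix y \<noteq> ix z" using ix_inj[OF \<open>y \<in> X\<close> \<open>z \<in> X\<close>] yz(3) by auto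
    moreover have "even (ix y) = even (ix z)" using yz by (simp add: Y_def)
    ultimately have "Suc (Suc (ix y)) \<le> ix z" by presburger
    then have "m (Suc (Suc (ix y))) \<le> m (ix z)" using strict_mono_less_eq[OF m(1)] by blast
    moreover have "m (ix z) \<le> z" "y < m (Suc (ix y))"
      using in_part_index[OF s, of z] in_part_index[OF s, of y]
      by (simp_all add: ix_def interval_partition_def)
    ultimately have "y < m (Suc (ix y)) \<and> m (Suc (Suc (ix y))) \<le> z" by linarith
    then show "\<exists>K. y < m K \<and> m (Suc K) \<le> z" by blast
  qed
  with Yb show ?thesis by blast
qed

lemma cofinite_strategy_thresholds:
  assumes cofin: "\<And>t. finite (- \<sigma> t)"
  obtains m where "strict_mono m" "m 0 = 0"
    "\<And>K t x. set t \<subseteq> {..<m K} \<Longrightarrow> length t \<le> m K \<Longrightarrow> m (Suc K) \<le> x \<Longrightarrow> x \<in> \<sigma> t"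
proof -
  define B where "B M = (\<Union>t\<in>{t. set t \<subseteq> {..<M} \<and> length t \<le> M}. - \<sigma> t)" for M
  have B_finite: "finite (B M)" for M
    unfolding B_def by (rule finite_UN_I) (simp_all add: finite_lists_length_le cofin)
  define m where "m = rec_nat 0 (\<lambda>_ M. Suc (M + Max (insert 0 (B M))))"
  have "strict_mono m" by (rule strict_mono_Suc_iff[THEN iffD2]) (simp add: m_def)
  moreover have "m 0 = 0" by (simp add: m_def)
  moreover have "x \<in> \<sigma> t"
    if "set t \<subseteq> {..<m K}" "length t \<le> m K" "m (Suc K) \<le> x" for K t x
  proof -
    have "y < x" if "y \<in> B (m K)" for y
    proof -
      have "y \<le> Max (insert 0 (B (m K)))" using that B_finite by simp
      moreover have "m (Suc K) = Suc (m K + Max (insert 0 (B (m K))))" by (simp add: m_def)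
      ultimately show ?thesis using \<open>m (Suc K) \<le> x\<close> by linarith
    qed
    moreover have "x \<in> B (m K)" if "x \<notin> \<sigma> t"
      using \<open>set t \<subseteq> {..<m K}\<close> \<open>length t \<le> m K\<close> that by (auto simp: B_def)
    ultimately show ?thesis by blast
  qed
  ultimately show ?thesis by (rule that)
qed

lemma interval_separated_enumerate_play:
  assumes m0: "m 0 = 0"
    and thresholds: "\<And>K t x. set t \<subseteq> {..<m K} \<Longrightarrow> length t \<le> m K \<Longrightarrow> m (Suc K) \<le> x \<Longrightarrow> x \<in> \<sigma> t"
    and Y: "infinite Y" "interval_separated m Y" "\<And>y. y \<in> Y \<Longrightarrow> m (Suc 0) \<le> y"
  shows "enumerate Y k \<in> \<sigma> (map (enumerate Y) [0..<k])"
proof (cases k)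
  case 0
  then show ?thesis using thresholds[of "[]" 0] Y(3) enumerate_in_set[OF Y(1)] m0 by simp
next
  case (Suc j)
  let ?n = "enumerate Y"
  obtain K where K: "?n j < m K" "m (Suc K) \<le> ?n (Suc j)"
    using Y(2) enumerate_in_set[OF Y(1)] enumerate_step[OF Y(1)]
    unfolding interval_separated_def by blast
  have "set (map ?n [0..<Suc j]) \<subseteq> {..<m K}"
    using K(1) Y(1) by (auto simp del: upt_Suc intro: le_less_trans[of _ "?n j"])
  moreover have "length (map ?n [0..<Suc j]) \<le> m K"
    using le_enumerate[OF Y(1), of j] K(1) by simp
  ultimately show ?thesis using thresholds K(2) Suc by blast
qed

lemma weak_Q_filter_imp_not_I_winning:
  assumes F: "is_filter F" "weak_Q_filter F"
  shows "\<not> I_winning Fr (positive_sets F) \<sigma>"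
proof
  assume win: "I_winning Fr (positive_sets F) \<sigma>"
  then have cofin: "\<And>t. finite (- \<sigma> t)" by (auto simp: I_winning_def I_strategy_def Fr_def)
  obtain m where m: "strict_mono m" "m 0 = 0"
    and thresholds: "\<And>K t x. set t \<subseteq> {..<m K} \<Longrightarrow> length t \<le> m K \<Longrightarrow> m (Suc K) \<le> x \<Longrightarrow> x \<in> \<sigma> t"
    using cofinite_strategy_thresholds[of \<sigma>] cofin by blast
  obtain Y where "Y \<in> positive_sets F" "interval_separated m Y"
    using weak_Q_filter_interval_separated[OF F m] by blast
  define Y' where "Y' = Y - {..<m (Suc 0)}"
  have Y': "Y' \<in> positive_sets F" "interval_separated m Y'" "\<And>y. y \<in> Y' \<Longrightarrow> m (Suc 0) \<le> y"
    using positive_sets_Diff_finite[OF F(1) \<open>Y \<in> positive_sets F\<close>] \<open>interval_separated m Y\<close>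
    by (auto simp: Y'_def interval_separated_def)
  have inf: "infinite Y'" using positive_sets_infinite[OF F(1) Y'(1)] .
  have "\<forall>k. enumerate Y' k \<in> \<sigma> (map (enumerate Y') [0..<k])"
    using interval_separated_enumerate_play[of m \<sigma> Y'] m(2) thresholds inf Y' by blast
  with win Y'(1) range_enumerate[OF inf] show False by (auto simp: I_winning_def)
qed

lemma diagonalized_positive_sets:
  assumes "\<forall>Y\<in>F. \<exists>n. finite (D n - Y)" "\<And>n. infinite (D n \<inter> R)"
  shows "R \<in> positive_sets F"
  using assms by (auto simp: positive_sets_def Diff_eq)

lemma omega_diagonalizable_imp_II_has_winning_strategy:
  assumes "omega_diagonalizable F"
  shows "II_has_winning_strategy Fr (positive_sets F)"
proof -
  obtain D :: "nat \<Rightarrow> nat set"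
    where D_infinite: "\<And>n. infinite (D n)" and diag: "\<forall>Y\<in>F. \<exists>n. finite (D n - Y)"
    using assms unfolding omega_diagonalizable_def by blast
  define \<tau> where "\<tau> xs = (case prod_decode (length xs - 1) of
    (n, i) \<Rightarrow> LEAST x. x \<in> D n \<inter> last xs \<and> i \<le> x)" for xs
  have \<tau>: "\<tau> xs \<in> D n \<inter> last xs \<and> i \<le> \<tau> xs"
    if "finite (- last xs)" "prod_decode (length xs - 1) = (n, i)" for xs n i
  proof -
    have "infinite (D n - - last xs - {..<i})"
      by (intro Diff_infinite_finite) (simp_all add: D_infinite that(1))
    then obtain x where "x \<in> D n - - last xs - {..<i}" by (metis ex_in_conv finite.emptyI)
    then have "x \<in> D n \<inter> last xs \<and> i \<le> x" by auto
    then show ?thesis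
      unfolding \<tau>_def that(2) using LeastI[of "\<lambda>x. x \<in> D n \<inter> last xs \<and> i \<le> x"] by simp
  qed
  have "II_winning Fr (positive_sets F) \<tau>"
    unfolding II_winning_def II_strategy_def
  proof (intro conjI allI impI)
    fix xs :: "nat set list" assume "xs \<noteq> [] \<and> set xs \<subseteq> Fr"
    then have "finite (- last xs)" using last_in_set by (fastforce simp: Fr_def)
    then show "\<tau> xs \<in> last xs" using \<tau> by (metis IntE surj_pair)
  next
    fix X :: "nat \<Rightarrow> nat set" assume X: "\<forall>k. X k \<in> Fr"
    let ?R = "range (\<lambda>k. \<tau> (map X [0..<Suc k]))"
    have "infinite (D n \<inter> ?R)" for n
      unfolding infinite_nat_iff_unbounded_le
    proof
      fix i
      let ?x = "\<tau> (map X [0..<Suc (prod_encode (n, i))])"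
      have "?x \<in> D n \<and> i \<le> ?x"
        using \<tau>[of "map X [0..<Suc (prod_encode (n, i))]" n i] X by (simp add: Fr_def)
      moreover have "?x \<in> ?R" by (rule rangeI)
      ultimately show "\<exists>x\<ge>i. x \<in> D n \<inter> ?R" by blast
    qed
    then show "?R \<in> positive_sets F" using diagonalized_positive_sets diag by blast
  qed
  then show ?thesis by (auto simp: II_has_winning_strategy_def)
qed

lemma atLeast_in_Fr: "{k..} \<in> Fr"
  by (simp add: Fr_def Compl_atLeast)

primrec self_history :: "(nat list \<Rightarrow> nat) \<Rightarrow> nat \<Rightarrow> nat list" where
  "self_history c 0 = []"
| "self_history c (Suc k) = self_history c k @ [c (self_history c k)]"

lemma II_winning_answers_in_filter_set:
  assumes F: "is_filter F" and win: "II_winning Fr (positive_sets F) \<tau>" and "Y \<in> F"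
  shows "\<exists>t. \<forall>m. \<tau> (map atLeast (t @ [m])) \<in> Y"
proof (rule ccontr)
  assume "\<not> ?thesis"
  then obtain c where c: "\<And>t. \<tau> (map atLeast (t @ [c t])) \<notin> Y" by metis
  define X where "X k = atLeast (c (self_history c k))" for k
  have X_history: "map X [0..<k] = map atLeast (self_history c k)" for k
    by (induction k) (simp_all add: X_def)
  have "X k \<in> Fr" for k by (simp add: X_def atLeast_in_Fr)
  then have "range (\<lambda>k. \<tau> (map X [0..<Suc k])) \<in> positive_sets F"
    using win by (auto simp: II_winning_def)
  moreover have "range (\<lambda>k. \<tau> (map X [0..<Suc k])) \<subseteq> - Y"
    using c X_history[of "Suc _"] by auto
  then have "- range (\<lambda>k. \<tau> (map X [0..<Suc k])) \<in> F"
    using filter_mono[OF F \<open>Y \<in> F\<close>] by blast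
  ultimately show False by (simp add: positive_sets_def)
qed

lemma II_winning_imp_omega_diagonalizable:
  assumes F: "is_filter F" and win: "II_winning Fr (positive_sets F) \<tau>"
  shows "omega_diagonalizable F"
proof -
  define D where "D n = range (\<lambda>m. \<tau> (map atLeast (from_nat n @ [m])))" for n :: nat
  have strategy: "\<tau> xs \<in> last xs" if "xs \<noteq> []" "set xs \<subseteq> Fr" for xs
    using win that by (auto simp: II_winning_def II_strategy_def)
  have "m \<le> \<tau> (map atLeast (t @ [m]))" for t m
    using strategy[of "map atLeast (t @ [m])"] atLeast_in_Fr by (simp add: image_subset_iff)
  then have "infinite (D n)" for n
    unfolding infinite_nat_iff_unbounded_le D_def by blast
  moreover have "\<exists>n. finite (D n - Y)" if Y: "Y \<in> F" for Y
  proof -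
    obtain t where "\<forall>m. \<tau> (map atLeast (t @ [m])) \<in> Y"
      using II_winning_answers_in_filter_set[OF F win Y] by blast
    then have "D (to_nat t) - Y = {}" by (auto simp: D_def)
    then show ?thesis by (metis finite.emptyI)
  qed
  ultimately show ?thesis unfolding omega_diagonalizable_def by blast
qed

theorem theorem2p2:
  assumes "proper_filter F"
  shows "(I_has_winning_strategy Fr (positive_sets F) \<longleftrightarrow> \<not> weak_Q_filter F) \<and>
         (II_has_winning_strategy Fr (positive_sets F) \<longleftrightarrow> omega_diagonalizable F)"
proof -
  have F: "is_filter F" using assms by (simp add: proper_filter_def)
  show ?thesis
    using not_weak_Q_filter_imp_I_has_winning_strategy weak_Q_filter_imp_not_I_winning[OF F]
      omega_diagonalizable_imp_II_has_winning_strategy II_winning_imp_omega_diagonalizable[OF F]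
    unfolding I_has_winning_strategy_def II_has_winning_strategy_def by blast
qed

end
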